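(* Let $\mathcal Q$ be a collection of probability measures on $\{0,1\}^{\mathbb N}$, let $\varepsilon\ge 0$, and let $\mathcal Q_\varepsilon=\{q^1,q^2,\dots\}\subset[0,1]^{\mathbb N}$ be a countable (finite or countably infinite), enumerated set such that for every $q\in\mathrm{Mean}(\mathcal Q)$ there is an index $i$ with $\|q-q^i\|_\infty\le\varepsilon$. For a sample $S=(X^{(1)},\dots,X^{(n)})$, let $\hat q_j=\frac1n\sum_{k=1}^n X^{(k)}_j$ be the empirical mean, and let $\tilde q_n(S)=q^{i}$ where $i$ is the smallest index such that $|q^{i}_j-\hat q_j|\le\sqrt{\tfrac{3\log n}{n}}+\varepsilon$ for all $j\in\{1,\dots,n-1\}$ (the output is undefined if no such index exists). Then for every $\mu\in\mathcal Q$, with $q=\mathrm{Mean}(\mu)$ and $X^{(1)},X^{(2)},\dots$ an i.i.d. sequence with law $\mu$ (with $\tilde q_n$ computed from the first $n$ points), almost surely there exists $n_0$ such that for all $n>n_0$, $\tilde q_n$ is defined and $\|\tilde q_n-q\|_\infty\le\varepsilon$.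
   Context: $\{0,1\}^{\mathbb N}$ carries the product $\sigma$-algebra. For a probability measure $\mu$ on $\{0,1\}^{\mathbb N}$, $\mathrm{Mean}(\mu)\in[0,1]^{\mathbb N}$ is the vector whose $j$-th coordinate is $\mathbb E[X_j]$ for $X\sim\mu$. For a collection $\mathcal Q$ of such measures, $\mathrm{Mean}(\mathcal Q)=\{\mathrm{Mean}(\mu):\mu\in\mathcal Q\}$. Logarithms are natural. *)

theory Defs
  imports "HOL-Probability.Probability"
begin

text \<open>The measurable space {0,1}^N with the product sigma-algebra.
  Coordinates are indexed from 0 here; paper coordinate j (j = 1,2,...) is coordinate j-1.\<close>
definition cube :: "(nat \<Rightarrow> bool) measure" where
  "cube = Pi\<^sub>M UNIV (\<lambda>_. count_space UNIV)"

definition Mean :: "(nat \<Rightarrow> bool) measure \<Rightarrow> nat \<Rightarrow> real" where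
  "Mean \<mu> j = (\<integral>x. (if x j then 1 else 0) \<partial>\<mu>)"

definition emp_mean :: "nat \<Rightarrow> (nat \<Rightarrow> nat \<Rightarrow> bool) \<Rightarrow> nat \<Rightarrow> real" where
  "emp_mean n S j = (1 / real n) * (\<Sum>k<n. (if S k j then 1 else 0))"

text \<open>Acceptance test for candidate index i (paper coordinates 1..n-1 = our 0..n-2).\<close>
definition accepts :: "(nat \<Rightarrow> nat \<Rightarrow> real) \<Rightarrow> real \<Rightarrow> nat \<Rightarrow> (nat \<Rightarrow> nat \<Rightarrow> bool) \<Rightarrow> nat \<Rightarrow> bool" where
  "accepts qs \<epsilon> n S i \<longleftrightarrow>
     (\<forall>j < n - 1. \<bar>qs i j - emp_mean n S j\<bar> \<le> sqrt (3 * ln (real n) / real n) + \<epsilon>)"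

text \<open>The estimator: the candidate with the smallest admissible index in I; None = undefined.\<close>
definition qtilde :: "(nat \<Rightarrow> nat \<Rightarrow> real) \<Rightarrow> nat set \<Rightarrow> real \<Rightarrow> nat \<Rightarrow> (nat \<Rightarrow> nat \<Rightarrow> bool)
    \<Rightarrow> (nat \<Rightarrow> real) option" where
  "qtilde qs I \<epsilon> n S =
     (if \<exists>i\<in>I. accepts qs \<epsilon> n S i
      then Some (qs (LEAST i. i \<in> I \<and> accepts qs \<epsilon> n S i)) else None)"

end

theory Submission
  imports Defs "HOL-Real_Asymp.Real_Asymp"
begin

text \<open>By Hoeffding's inequality, an empirical coordinate mean deviates from its expectation by at
  least r_n = sqrt (3 log n / n) with probability at most 2 exp (-2 n r_n^2) = 2 n^-6; a union bound
  over the n - 1 tested coordinates gives 2 n^-5, which is summable. By Borel-Cantelli, almost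
  surely all tested empirical means are eventually within r_n of the true means. For such a sample
  the candidate q^i0 that epsilon-covers the true mean is eventually accepted, while each of the
  finitely many smaller indices whose candidate is epsilon-far in some coordinate j is eventually
  rejected, because r_n tends to 0 and coordinate j is eventually tested. So the least accepted
  index is at most i0 and its candidate is epsilon-close.\<close>

lemma indep_vars_PiM_components:
  assumes M: "\<And>i. i \<in> I \<Longrightarrow> prob_space (M i)"
  shows "prob_space.indep_vars (Pi\<^sub>M I M) M (\<lambda>i x. x i) I"
proof -
  interpret P: prob_space "Pi\<^sub>M I M"
    using M by (rule prob_space_PiM)
  show ?thesis
  proof (cases "I = {}")
    case True
    then show ?thesis
      using P.prob_space_axioms by (simp add: prob_space.indep_vars_def prob_space.indep_sets_def)
  next
    case False
    have "distr (Pi\<^sub>M I M) (Pi\<^sub>M I M) (\<lambda>x. restrict x I) = Pi\<^sub>M I M"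
      by (subst distr_cong[where g = "\<lambda>x. x"]) (auto simp: space_PiM)
    also have "\<dots> = (\<Pi>\<^sub>M i\<in>I. distr (Pi\<^sub>M I M) (M i) (\<lambda>x. x i))"
      by (intro PiM_cong refl distr_PiM_component[symmetric]) (auto simp: M)
    finally show ?thesis
      using False by (subst prob_space.indep_vars_iff_distr_eq_PiM'[OF P.prob_space_axioms]) auto
  qed
qed

lemma Hoeffding_iid_sample_mean:
  fixes f :: "'a \<Rightarrow> real"
  assumes M: "prob_space M" and f[measurable]: "f \<in> borel_measurable M"
    and f_bounded: "\<And>x. x \<in> space M \<Longrightarrow> f x \<in> {a..b}"
    and "a < b" and n: "n > 0" and "t \<ge> 0"
  shows "measure (Pi\<^sub>M UNIV (\<lambda>_::nat. M))
      {x \<in> space (Pi\<^sub>M UNIV (\<lambda>_::nat. M)). t \<le> \<bar>(\<Sum>k<n. f (x k)) / n - integral\<^sup>L M f\<bar>}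
    \<le> 2 * exp (-2 * real n * t\<^sup>2 / (b - a)\<^sup>2)"
proof -
  let ?P = "Pi\<^sub>M UNIV (\<lambda>_::nat. M)"
  interpret P: prob_space ?P
    using M by (rule prob_space_PiM)
  have [measurable]: "(\<lambda>x. x k) \<in> measurable ?P M" for k
    by (rule measurable_component_singleton) simp
  have distr_component: "distr ?P M (\<lambda>x. x k) = M" for k
    using distr_PiM_component[of UNIV "\<lambda>_. M" k] M by simp
  have indep: "P.indep_vars (\<lambda>_. borel) (\<lambda>k x. f (x k)) {..<n}"
    by (rule P.indep_vars_compose2[OF P.indep_vars_subset[OF indep_vars_PiM_components]])
      (auto simp: M)
  have distr_sample: "distr ?P borel (\<lambda>x. f (x k)) = distr M borel f" for k
  proof -
    have "distr ?P borel (\<lambda>x. f (x k)) = distr (distr ?P M (\<lambda>x. x k)) borel f"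
      by (subst distr_distr) (auto simp: comp_def)
    then show ?thesis
      by (simp only: distr_component)
  qed
  have expectation: "P.expectation (\<lambda>x. f (x 0)) = integral\<^sup>L M f"
  proof -
    have "P.expectation (\<lambda>x. f (x 0)) = integral\<^sup>L (distr ?P M (\<lambda>x. x 0)) f"
      by (rule integral_distr[symmetric]) auto
    then show ?thesis
      by (simp only: distr_component)
  qed
  have "AE x in ?P. f (x 0) \<in> {a..b}"
    by (intro AE_I2 f_bounded) (auto simp: space_PiM)
  then interpret H: Hoeffding_ineq_iid ?P "{..<n}" "\<lambda>k x. f (x k)" "\<lambda>x. f (x 0)" a b
      "P.expectation (\<lambda>x. f (x 0))"
    by unfold_locales (simp_all add: indep distr_sample)
  have "{..<n} \<noteq> {}"
    using n by auto
  then show ?thesis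
    using H.Hoeffding_ineq_abs_ge'[of t] assms by (simp add: expectation)
qed

lemma pred_cube_coordinate:
  assumes "sets \<mu> = sets cube"
  shows "Measurable.pred \<mu> (\<lambda>x. x j)"
proof -
  have "(\<lambda>x::nat \<Rightarrow> bool. x j) \<in> measurable cube (count_space UNIV)"
    unfolding cube_def by (rule measurable_component_singleton) simp
  then show ?thesis
    using measurable_cong_sets[OF assms refl] by blast
qed

lemma prob_emp_mean_deviation:
  assumes \<mu>: "prob_space \<mu>" "sets \<mu> = sets cube" and "n > 0" "t \<ge> 0"
  shows "measure (Pi\<^sub>M UNIV (\<lambda>_::nat. \<mu>))
      {S \<in> space (Pi\<^sub>M UNIV (\<lambda>_::nat. \<mu>)). t \<le> \<bar>emp_mean n S j - Mean \<mu> j\<bar>}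
    \<le> 2 * exp (-2 * real n * t\<^sup>2)"
proof -
  have [measurable]: "Measurable.pred \<mu> (\<lambda>x. x j)"
    using \<mu>(2) by (rule pred_cube_coordinate)
  show ?thesis
    using Hoeffding_iid_sample_mean[of \<mu> "\<lambda>x. if x j then 1 else 0" 0 1 n t] assms
    by (simp add: emp_mean_def Mean_def)
qed

abbreviation conf_radius :: "nat \<Rightarrow> real" where
  "conf_radius n \<equiv> sqrt (3 * ln (real n) / real n)"

lemma exp_conf_radius:
  assumes "n > 0"
  shows "exp (-2 * real n * (conf_radius n)\<^sup>2) = 1 / real n ^ 6"
proof -
  have "-2 * real n * (conf_radius n)\<^sup>2 = - (real 6 * ln (real n))"
    using assms by (simp add: field_simps)
  then have "exp (-2 * real n * (conf_radius n)\<^sup>2) = inverse (exp (ln (real n)) ^ 6)"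
    by (simp only: exp_minus exp_of_nat_mult)
  then show ?thesis
    using assms by (simp add: divide_inverse)
qed

lemma prob_emp_means_deviate:
  assumes \<mu>: "prob_space \<mu>" "sets \<mu> = sets cube"
  defines "P \<equiv> Pi\<^sub>M UNIV (\<lambda>_::nat. \<mu>)"
  shows "measure P (\<Union>j<n - 1. {S \<in> space P. conf_radius n \<le> \<bar>emp_mean n S j - Mean \<mu> j\<bar>})
    \<le> 2 / real n ^ 5"
proof (cases "n = 0")
  case False
  interpret P: prob_space P
    unfolding P_def using \<mu>(1) by (rule prob_space_PiM)
  have [measurable]: "Measurable.pred \<mu> (\<lambda>x. x j)" for j
    using \<mu>(2) by (rule pred_cube_coordinate)
  have [measurable]: "(\<lambda>x. x k) \<in> measurable P \<mu>" for k
    unfolding P_def by (rule measurable_component_singleton) simp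
  have "measure P (\<Union>j<n - 1. {S \<in> space P. conf_radius n \<le> \<bar>emp_mean n S j - Mean \<mu> j\<bar>})
      \<le> (\<Sum>j<n - 1. measure P {S \<in> space P. conf_radius n \<le> \<bar>emp_mean n S j - Mean \<mu> j\<bar>})"
    by (rule P.finite_measure_subadditive_finite) (auto simp: emp_mean_def)
  also have "\<dots> \<le> (\<Sum>j<n - 1. 2 * exp (-2 * real n * (conf_radius n)\<^sup>2))"
    unfolding P_def by (rule sum_mono, rule prob_emp_mean_deviation[OF \<mu>]) (use False in auto)
  also have "\<dots> = real (n - 1) * 2 / real n ^ 6"
    using exp_conf_radius[of n] False by simp
  also have "\<dots> \<le> real n * 2 / real n ^ 6"
    by (intro divide_right_mono mult_right_mono) auto
  also have "\<dots> = 2 / real n ^ 5"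
    using False by (simp add: field_simps power_eq_if)
  finally show ?thesis .
qed simp

lemma AE_eventually_emp_means_close:
  assumes \<mu>: "prob_space \<mu>" "sets \<mu> = sets cube"
  shows "AE S in Pi\<^sub>M UNIV (\<lambda>_::nat. \<mu>).
    eventually (\<lambda>n. \<forall>j<n - 1. \<bar>emp_mean n S j - Mean \<mu> j\<bar> < conf_radius n) sequentially"
proof -
  let ?P = "Pi\<^sub>M UNIV (\<lambda>_::nat. \<mu>)"
  define A where
    "A n = (\<Union>j<n - 1. {S \<in> space ?P. conf_radius n \<le> \<bar>emp_mean n S j - Mean \<mu> j\<bar>})" for n
  interpret P: prob_space ?P
    using \<mu>(1) by (rule prob_space_PiM)
  have [measurable]: "Measurable.pred \<mu> (\<lambda>x. x j)" for j
    using \<mu>(2) by (rule pred_cube_coordinate)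
  have [measurable]: "(\<lambda>x. x k) \<in> measurable ?P \<mu>" for k
    by (rule measurable_component_singleton) simp
  have A_sets: "A n \<in> sets ?P" for n
    unfolding A_def emp_mean_def by measurable
  have "summable (\<lambda>n. 2 / real n ^ 5)"
    using summable_mult[OF inverse_power_summable[of 5, where 'a=real], of 2]
    by (simp add: divide_inverse)
  then have "summable (\<lambda>n. measure ?P (A n))"
    by (rule summable_comparison_test[rotated])
      (use prob_emp_means_deviate[OF \<mu>] in \<open>auto simp: A_def\<close>)
  then have "AE S in ?P. eventually (\<lambda>n. S \<in> space ?P - A n) sequentially"
    by (intro borel_cantelli_AE1) (auto simp: A_sets less_top[symmetric])
  then show ?thesis
    by (rule AE_mp[OF _ AE_I2]) (auto elim!: eventually_mono simp: A_def not_le)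
qed

lemma accepts_if_emp_means_close:
  assumes "\<forall>j<n - 1. \<bar>emp_mean n S j - q j\<bar> \<le> conf_radius n"
    and "\<forall>j. \<bar>q j - qs i j\<bar> \<le> \<epsilon>"
  shows "accepts qs \<epsilon> n S i"
  unfolding accepts_def
proof (intro allI impI)
  fix j assume "j < n - 1"
  then show "\<bar>qs i j - emp_mean n S j\<bar> \<le> conf_radius n + \<epsilon>"
    using assms by (smt (verit))
qed

lemma eventually_not_accepts_far:
  assumes close: "eventually (\<lambda>n. \<forall>j<n - 1. \<bar>emp_mean n S j - q j\<bar> < conf_radius n) sequentially"
    and far: "\<epsilon> < \<bar>qs i j - q j\<bar>"
  shows "eventually (\<lambda>n. \<not> accepts qs \<epsilon> n S i) sequentially"
proof -
  define d where "d = \<bar>qs i j - q j\<bar> - \<epsilon>"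
  have "(\<lambda>n. 2 * conf_radius n) \<longlonglongrightarrow> 0"
    by real_asymp
  moreover have "d > 0"
    using far by (simp add: d_def)
  ultimately have "eventually (\<lambda>n. 2 * conf_radius n < d) sequentially"
    by (rule order_tendstoD(2))
  moreover have "eventually (\<lambda>n. j < n - 1) sequentially"
    by (rule eventually_sequentiallyI[of "j + 2"]) auto
  ultimately show ?thesis
    using close
  proof eventually_elim
    case (elim n)
    have "\<bar>emp_mean n S j - q j\<bar> < conf_radius n"
      using elim by blast
    moreover have "\<bar>qs i j - q j\<bar> \<le> \<bar>qs i j - emp_mean n S j\<bar> + \<bar>emp_mean n S j - q j\<bar>"
      using abs_triangle_ineq[of "qs i j - emp_mean n S j" "emp_mean n S j - q j"] by simp
    ultimately have "conf_radius n + \<epsilon> < \<bar>qs i j - emp_mean n S j\<bar>"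
      using \<open>2 * conf_radius n < d\<close> unfolding d_def by linarith
    then show ?case
      using elim unfolding accepts_def by (auto simp: not_le)
  qed
qed

lemma qtilde_eventually_close:
  assumes close: "eventually (\<lambda>n. \<forall>j<n - 1. \<bar>emp_mean n S j - q j\<bar> < conf_radius n) sequentially"
    and i0: "i0 \<in> I" "\<forall>j. \<bar>q j - qs i0 j\<bar> \<le> \<epsilon>"
  shows "eventually (\<lambda>n. \<exists>v. qtilde qs I \<epsilon> n S = Some v \<and> (\<forall>j. \<bar>v j - q j\<bar> \<le> \<epsilon>)) sequentially"
proof -
  define B where "B = {i \<in> I. i < i0 \<and> (\<exists>j. \<epsilon> < \<bar>qs i j - q j\<bar>)}"
  have "finite B"
    unfolding B_def by auto
  moreover have "eventually (\<lambda>n. \<not> accepts qs \<epsilon> n S i) sequentially" if "i \<in> B" for i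
    using that eventually_not_accepts_far[OF close] unfolding B_def by blast
  ultimately have "eventually (\<lambda>n. \<forall>i\<in>B. \<not> accepts qs \<epsilon> n S i) sequentially"
    by (simp add: eventually_ball_finite)
  with close show ?thesis
  proof eventually_elim
    case (elim n)
    have accepts_i0: "accepts qs \<epsilon> n S i0"
      using elim i0 by (intro accepts_if_emp_means_close) (auto intro: less_imp_le)
    define m where "m = (LEAST i. i \<in> I \<and> accepts qs \<epsilon> n S i)"
    have m: "m \<in> I \<and> accepts qs \<epsilon> n S m"
      unfolding m_def by (rule LeastI[of _ i0]) (use i0 accepts_i0 in auto)
    have "m \<le> i0"
      unfolding m_def by (rule Least_le) (use i0 accepts_i0 in auto)
    have "qtilde qs I \<epsilon> n S = Some (qs m)"
      unfolding qtilde_def m_def using i0 accepts_i0 by auto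
    moreover have "\<forall>j. \<bar>qs m j - q j\<bar> \<le> \<epsilon>"
    proof (cases "m = i0")
      case True
      then show ?thesis
        using i0 by (simp add: abs_minus_commute)
    next
      case False
      have "m \<notin> B"
        using elim m by blast
      with False \<open>m \<le> i0\<close> m show ?thesis
        unfolding B_def by (auto simp: not_less)
    qed
    ultimately show ?case
      by blast
  qed
qed

theorem lemma1:
  fixes Q :: "(nat \<Rightarrow> bool) measure set"
    and \<epsilon> :: real
    and I :: "nat set"
    and qs :: "nat \<Rightarrow> nat \<Rightarrow> real"
  assumes Q: "\<And>\<mu>. \<mu> \<in> Q \<Longrightarrow> prob_space \<mu> \<and> sets \<mu> = sets cube"
    and eps: "\<epsilon> \<ge> 0"
    and range01: "\<And>i j. i \<in> I \<Longrightarrow> qs i j \<in> {0..1}"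
    and cover: "\<And>\<mu>. \<mu> \<in> Q \<Longrightarrow> \<exists>i\<in>I. \<forall>j. \<bar>Mean \<mu> j - qs i j\<bar> \<le> \<epsilon>"
    and mu: "\<mu> \<in> Q"
  shows "AE S in Pi\<^sub>M UNIV (\<lambda>_::nat. \<mu>).
           \<exists>n0. \<forall>n > n0. \<exists>v. qtilde qs I \<epsilon> n S = Some v \<and> (\<forall>j. \<bar>v j - Mean \<mu> j\<bar> \<le> \<epsilon>)"
proof -
  obtain i0 where i0: "i0 \<in> I" "\<forall>j. \<bar>Mean \<mu> j - qs i0 j\<bar> \<le> \<epsilon>"
    using cover[OF mu] by blast
  have "AE S in Pi\<^sub>M UNIV (\<lambda>_::nat. \<mu>).
      eventually (\<lambda>n. \<forall>j<n - 1. \<bar>emp_mean n S j - Mean \<mu> j\<bar> < conf_radius n) sequentially"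
    using Q[OF mu] by (intro AE_eventually_emp_means_close) auto
  then show ?thesis
  proof (rule AE_mp, intro AE_I2 impI)
    fix S
    assume "eventually (\<lambda>n. \<forall>j<n - 1. \<bar>emp_mean n S j - Mean \<mu> j\<bar> < conf_radius n) sequentially"
    from qtilde_eventually_close[where q = "Mean \<mu>" and qs = qs, OF this i0]
    show "\<exists>n0. \<forall>n > n0. \<exists>v. qtilde qs I \<epsilon> n S = Some v \<and> (\<forall>j. \<bar>v j - Mean \<mu> j\<bar> \<le> \<epsilon>)"
      unfolding eventually_sequentially by (meson less_imp_le)
  qed
qed

end
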